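(* Let $r$ be a normalized formal generalized $r$-matrix. Then $\mathfrak g(r)\cap z^{-1}\mathfrak g[\![z]\!]=\{(1\otimes\alpha)r(z,0)\mid\alpha\in\mathfrak g^*\}$, and this subspace generates $\mathfrak g(r)$ as a Lie algebra.
   Context: $\Bbbk$ is a field of characteristic $0$, $\mathfrak g$ a finite-dimensional semisimple Lie algebra over $\Bbbk$ of dimension $d$ with Killing form $\kappa$, $\{b_i\}$ a $\kappa$-orthonormal basis, $\gamma=\sum_i b_i\otimes b_i$, and $\frac{1}{x-y}=\sum_{k\ge0}x^{-k-1}y^k$. A series $r\in(\mathfrak g\otimes\mathfrak g)(\!(x)\!)[\![y]\!]$ is in normalized standard form if $r=\frac{\gamma}{x-y}+r_0$ with $r_0\in(\mathfrak g\otimes\mathfrak g)[\![x,y]\!]$; then $\bar r(x,y)=\frac{\gamma}{x-y}-\tau(r_0(y,x))$, $\tau$ the flip. With $s^{ij}$ meaning substitution $(x,y)=(x_i,x_j)$ and placement of tensor factors in positions $i,j$ inside $(U(\mathfrak g)^{\otimes 3})\otimes\Bbbk(\!(x_1)\!)(\!(x_2)\!)[\![x_3]\!]$, a normalized formal generalized $r$-matrix is such an $r$ with $[r^{12},r^{13}]+[r^{12},r^{23}]+[r^{13},\bar r^{23}]=0$. For $s=\sum_{k,i}s_{k,i}(x)\otimes b_iy^k$, $\mathfrak g(s)=\mathrm{span}_\Bbbk\{s_{k,i}(z)\}\subseteq\mathfrak g(\!(z)\!)$. Here $r(z,0)\in\mathfrak g(\!(z)\!)\otimes\mathfrak g$ is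 the $y^0$-coefficient and $(1\otimes\alpha)$ applies $\alpha$ to the second factor. *)

theory Defs
  imports Main "HOL.Vector_Spaces" "HOL-Library.Groups_Big_Fun"
begin

definition lie_algebra :: "('k::field \<Rightarrow> 'g::ab_group_add \<Rightarrow> 'g) \<Rightarrow> ('g \<Rightarrow> 'g \<Rightarrow> 'g) \<Rightarrow> bool" where
  "lie_algebra scale br \<longleftrightarrow>
     vector_space scale \<and>
     (\<forall>x. Vector_Spaces.linear scale scale (br x)) \<and>
     (\<forall>y. Vector_Spaces.linear scale scale (\<lambda>x. br x y)) \<and>
     (\<forall>x. br x x = 0) \<and>
     (\<forall>x y z. br x (br y z) + br y (br z x) + br z (br x y) = 0)"

definition lie_ideal :: "('k::field \<Rightarrow> 'g::ab_group_add \<Rightarrow> 'g) \<Rightarrow> ('g \<Rightarrow> 'g \<Rightarrow> 'g) \<Rightarrow> 'g set \<Rightarrow> bool" where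
  "lie_ideal scale br I \<longleftrightarrow> module.subspace scale I \<and> (\<forall>x y. y \<in> I \<longrightarrow> br x y \<in> I)"

fun derived :: "('k::field \<Rightarrow> 'g::ab_group_add \<Rightarrow> 'g) \<Rightarrow> ('g \<Rightarrow> 'g \<Rightarrow> 'g) \<Rightarrow> nat \<Rightarrow> 'g set \<Rightarrow> 'g set" where
  "derived scale br 0 I = I"
| "derived scale br (Suc n) I =
     module.span scale {br a c | a c. a \<in> derived scale br n I \<and> c \<in> derived scale br n I}"

definition solvable_ideal :: "('k::field \<Rightarrow> 'g::ab_group_add \<Rightarrow> 'g) \<Rightarrow> ('g \<Rightarrow> 'g \<Rightarrow> 'g) \<Rightarrow> 'g set \<Rightarrow> bool" where
  "solvable_ideal scale br I \<longleftrightarrow> lie_ideal scale br I \<and> (\<exists>n. derived scale br n I = {0})"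

definition semisimple :: "('k::field \<Rightarrow> 'g::ab_group_add \<Rightarrow> 'g) \<Rightarrow> ('g \<Rightarrow> 'g \<Rightarrow> 'g) \<Rightarrow> bool" where
  "semisimple scale br \<longleftrightarrow> lie_algebra scale br \<and> (\<forall>I. solvable_ideal scale br I \<longrightarrow> I = {0})"

definition lin_trace :: "('k::field \<Rightarrow> 'g::ab_group_add \<Rightarrow> 'g) \<Rightarrow> ('g \<Rightarrow> 'g) \<Rightarrow> 'k" where
  "lin_trace scale f =
     (let B = (SOME B. finite B \<and> \<not> module.dependent scale B \<and> module.span scale B = UNIV)
      in \<Sum>v\<in>B. module.representation scale B (f v) v)"

definition killing :: "('k::field \<Rightarrow> 'g::ab_group_add \<Rightarrow> 'g) \<Rightarrow> ('g \<Rightarrow> 'g \<Rightarrow> 'g) \<Rightarrow> 'g \<Rightarrow> 'g \<Rightarrow> 'k" where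
  "killing scale br x y = lin_trace scale (\<lambda>v. br x (br y v))"

text \<open>A series r in (g\<otimes>g)((x))[[y]] is encoded by its coefficients:
  r = \<Sum>_{n,k} \<Sum>_i (r n k i) \<otimes> b_i x^n y^k   (n :: int, k :: nat),
  i.e. the second tensor factor is expanded in the basis b.\<close>

text \<open>Coefficients of \<gamma>/(x-y) = \<Sum>_k \<Sum>_i b_i \<otimes> b_i x^(-k-1) y^k.\<close>
definition gam :: "('i \<Rightarrow> 'g::zero) \<Rightarrow> int \<Rightarrow> nat \<Rightarrow> 'i \<Rightarrow> 'g" where
  "gam b n k i = (if n = - int k - 1 then b i else 0)"

definition rzero :: "('i \<Rightarrow> 'g::ab_group_add) \<Rightarrow> (int \<Rightarrow> nat \<Rightarrow> 'i \<Rightarrow> 'g) \<Rightarrow> int \<Rightarrow> nat \<Rightarrow> 'i \<Rightarrow> 'g" where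
  "rzero b r n k i = r n k i - gam b n k i"

text \<open>Normalized standard form: r - \<gamma>/(x-y) lies in (g\<otimes>g)[[x,y]].\<close>
definition normalized_standard_form :: "('i \<Rightarrow> 'g::ab_group_add) \<Rightarrow> (int \<Rightarrow> nat \<Rightarrow> 'i \<Rightarrow> 'g) \<Rightarrow> bool" where
  "normalized_standard_form b r \<longleftrightarrow> (\<forall>n k i. n < 0 \<longrightarrow> rzero b r n k i = 0)"

text \<open>rbar(x,y) = \<gamma>/(x-y) - \<tau>(r0(y,x)).  The x^n y^k coefficient of \<tau>(r0(y,x)) is
  \<tau>(r0_{k,n}) = \<Sum>_i b_i \<otimes> r0_{k,n,i} = \<Sum>_j (\<Sum>_i \<kappa>(r0_{k,n,i}, b_j) b_i) \<otimes> b_j.\<close>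
definition rbar :: "('k::field \<Rightarrow> 'g::ab_group_add \<Rightarrow> 'g) \<Rightarrow> ('g \<Rightarrow> 'g \<Rightarrow> 'g) \<Rightarrow> ('i::finite \<Rightarrow> 'g)
     \<Rightarrow> (int \<Rightarrow> nat \<Rightarrow> 'i \<Rightarrow> 'g) \<Rightarrow> int \<Rightarrow> nat \<Rightarrow> 'i \<Rightarrow> 'g" where
  "rbar scale br b r n k j =
     gam b n k j -
     (if 0 \<le> n then (\<Sum>i\<in>UNIV. scale (killing scale br (rzero b r (int k) (nat n) i) (b j)) (b i)) else 0)"

definition rI :: "(int \<Rightarrow> nat \<Rightarrow> 'i \<Rightarrow> 'g::zero) \<Rightarrow> int \<Rightarrow> int \<Rightarrow> 'i \<Rightarrow> 'g" where
  "rI r n m i = (if m < 0 then 0 else r n (nat m) i)"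

text \<open>The three terms of the generalized CYBE.  All three commutators lie in
  (g\<otimes>g\<otimes>g) \<otimes> k((x1))((x2))[[x3]] inside U(g)^{\<otimes>3}; an element of g\<otimes>g\<otimes>g is encoded as
  \<Sum>_{l,m} X l m \<otimes> b_l \<otimes> b_m.  Arguments: exponents a (x1), c2 (x2), c (x3), then l, m.\<close>
definition cybe1 :: "('k::field \<Rightarrow> 'g::ab_group_add \<Rightarrow> 'g) \<Rightarrow> ('g \<Rightarrow> 'g \<Rightarrow> 'g) \<Rightarrow> ('i::finite \<Rightarrow> 'g)
     \<Rightarrow> (int \<Rightarrow> nat \<Rightarrow> 'i \<Rightarrow> 'g) \<Rightarrow> int \<Rightarrow> int \<Rightarrow> nat \<Rightarrow> 'i \<Rightarrow> 'i \<Rightarrow> 'g" where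
  "cybe1 scale br b r a e c l m = Sum_any (\<lambda>p. br (rI r p e l) (r (a - p) c m))"

definition cybe2 :: "('k::field \<Rightarrow> 'g::ab_group_add \<Rightarrow> 'g) \<Rightarrow> ('g \<Rightarrow> 'g \<Rightarrow> 'g) \<Rightarrow> ('i::finite \<Rightarrow> 'g)
     \<Rightarrow> (int \<Rightarrow> nat \<Rightarrow> 'i \<Rightarrow> 'g) \<Rightarrow> int \<Rightarrow> int \<Rightarrow> nat \<Rightarrow> 'i \<Rightarrow> 'i \<Rightarrow> 'g" where
  "cybe2 scale br b r a e c l m = Sum_any (\<lambda>q.
     \<Sum>i\<in>UNIV. scale (killing scale br (br (b i) (r (e - q) c m)) (b l)) (rI r a q i))"

definition cybe3 :: "('k::field \<Rightarrow> 'g::ab_group_add \<Rightarrow> 'g) \<Rightarrow> ('g \<Rightarrow> 'g \<Rightarrow> 'g) \<Rightarrow> ('i::finite \<Rightarrow> 'g)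
     \<Rightarrow> (int \<Rightarrow> nat \<Rightarrow> 'i \<Rightarrow> 'g) \<Rightarrow> int \<Rightarrow> int \<Rightarrow> nat \<Rightarrow> 'i \<Rightarrow> 'i \<Rightarrow> 'g" where
  "cybe3 scale br b r a e c l m = (\<Sum>c1\<in>{..c}. \<Sum>i\<in>UNIV. \<Sum>j\<in>UNIV.
     scale (killing scale br (rbar scale br b r e (c - c1) j) (b l) * killing scale br (br (b i) (b j)) (b m))
           (r a c1 i))"

definition normalized_formal_gen_r_matrix :: "('k::field \<Rightarrow> 'g::ab_group_add \<Rightarrow> 'g) \<Rightarrow> ('g \<Rightarrow> 'g \<Rightarrow> 'g)
     \<Rightarrow> ('i::finite \<Rightarrow> 'g) \<Rightarrow> (int \<Rightarrow> nat \<Rightarrow> 'i \<Rightarrow> 'g) \<Rightarrow> bool" where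
  "normalized_formal_gen_r_matrix scale br b r \<longleftrightarrow>
     normalized_standard_form b r \<and>
     (\<forall>a e c l m. cybe1 scale br b r a e c l m + cybe2 scale br b r a e c l m + cybe3 scale br b r a e c l m = 0)"

section \<open>Laurent series g((z)), encoded as int \<Rightarrow> 'g (coefficient of z^n)\<close>

definition laurent_span :: "('k::field \<Rightarrow> 'g::ab_group_add \<Rightarrow> 'g) \<Rightarrow> (int \<Rightarrow> 'g) set \<Rightarrow> (int \<Rightarrow> 'g) set" where
  "laurent_span scale S =
     {f. \<exists>T c. finite T \<and> T \<subseteq> S \<and> f = (\<lambda>n. \<Sum>v\<in>T. scale (c v) (v n))}"

definition laurent_br :: "('g::ab_group_add \<Rightarrow> 'g \<Rightarrow> 'g) \<Rightarrow> (int \<Rightarrow> 'g) \<Rightarrow> (int \<Rightarrow> 'g) \<Rightarrow> int \<Rightarrow> 'g" where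
  "laurent_br br f h n = Sum_any (\<lambda>m. br (f m) (h (n - m)))"

inductive_set lie_gen :: "('k::field \<Rightarrow> 'g::ab_group_add \<Rightarrow> 'g) \<Rightarrow> ('g \<Rightarrow> 'g \<Rightarrow> 'g) \<Rightarrow> (int \<Rightarrow> 'g) set \<Rightarrow> (int \<Rightarrow> 'g) set"
  for scale br S where
  base: "f \<in> S \<Longrightarrow> f \<in> lie_gen scale br S"
| zero: "(\<lambda>n. 0) \<in> lie_gen scale br S"
| add: "f \<in> lie_gen scale br S \<Longrightarrow> h \<in> lie_gen scale br S \<Longrightarrow> (\<lambda>n. f n + h n) \<in> lie_gen scale br S"
| smult: "f \<in> lie_gen scale br S \<Longrightarrow> (\<lambda>n. scale c (f n)) \<in> lie_gen scale br S"
| bracket: "f \<in> lie_gen scale br S \<Longrightarrow> h \<in> lie_gen scale br S \<Longrightarrow> laurent_br br f h \<in> lie_gen scale br S"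

definition gr :: "('k::field \<Rightarrow> 'g::ab_group_add \<Rightarrow> 'g) \<Rightarrow> (int \<Rightarrow> nat \<Rightarrow> 'i \<Rightarrow> 'g) \<Rightarrow> (int \<Rightarrow> 'g) set" where
  "gr scale r = laurent_span scale {(\<lambda>n. r n k i) | k i. True}"

definition zinv_power_series :: "(int \<Rightarrow> 'g::zero) set" where
  "zinv_power_series = {f. \<forall>n. n < -1 \<longrightarrow> f n = 0}"

end

theory Submission
  imports Defs "HOL-Library.Function_Algebras"
begin

(* The coefficients r_{k,i}(z) of b_i y^k in r span g(r), and the normalization says that
   r_{k,i} has principal part b_i z^(-k-1).  So a combination of the r_{k,i} lies in
   z^(-1) g[[z]] only if its terms with k \<ge> 1 cancel, i.e. it is a combination of the
   r_{0,i}, and these are exactly the series (1 \<otimes> \<alpha>) r(z,0).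
   Read coefficientwise, the generalized CYBE writes [r_{e,l}, r_{c,m}] as a combination of the
   r_{k,i}, so g(r) is closed under the bracket.  For e = 0 it also writes
   \<Sum>_i \<kappa>([b_i,b_m],b_l) r_{c+1,i} in terms of brackets and combinations of the r_{k,i}
   with k \<le> c.  Since g has trivial centre, the vectors (\<kappa>([b_i,b_m],b_l))_i span the whole
   coefficient space, and induction on k puts every r_{k,i} into the Lie algebra generated by
   the r_{0,i}. *)

section \<open>Linear algebra\<close>

lemma sum_fun_apply: "(\<Sum>x\<in>A. F x) n = (\<Sum>x\<in>A. F x n)"
  by (induction A rule: infinite_finite_induct) auto

lemma vector_space_field: "vector_space ((*) :: 'a::field \<Rightarrow> 'a \<Rightarrow> 'a)"
  by unfold_locales (simp_all add: algebra_simps)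

definition fun_scale :: "('k \<Rightarrow> 'g \<Rightarrow> 'g) \<Rightarrow> 'k \<Rightarrow> ('a \<Rightarrow> 'g) \<Rightarrow> 'a \<Rightarrow> 'g" where
  "fun_scale scale c f = (\<lambda>n. scale c (f n))"

context vector_space
begin

lemma vector_space_fun_scale: "vector_space (fun_scale scale)"
  by unfold_locales (simp_all add: fun_eq_iff fun_scale_def scale_right_distrib scale_left_distrib)

lemma scale_Sum_any:
  assumes "finite {a. g a \<noteq> 0}"
  shows "c *s Sum_any g = Sum_any (\<lambda>a. c *s g a)"
proof -
  have "{a. c *s g a \<noteq> 0} \<subseteq> {a. g a \<noteq> 0}" by auto
  then show ?thesis
    using assms by (simp add: Sum_any.expand_superset[of "{a. g a \<noteq> 0}"] scale_sum_right)
qed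

lemma linear_functional_separating:
  assumes W: "subspace W" and v: "v \<notin> W"
  obtains \<phi> where "Vector_Spaces.linear scale (*) \<phi>" "\<And>w. w \<in> W \<Longrightarrow> \<phi> w = 0" "\<phi> v = 1"
proof -
  interpret pair: vector_space_pair scale "(*) :: 'a \<Rightarrow> 'a \<Rightarrow> 'a"
    by (intro vector_space_pair.intro vector_space_axioms vector_space_field)
  obtain T where T: "T \<subseteq> W" "independent T" "W \<subseteq> span T"
    by (rule maximal_independent_subset)
  have "v \<notin> span T"
    using span_minimal[OF T(1) W] v by blast
  then have "independent (insert v T)"
    using independent_insertI T(2) by blast
  then obtain \<phi> where \<phi>: "Vector_Spaces.linear scale (*) \<phi>"
    and \<phi>_T: "\<forall>u\<in>insert v T. \<phi> u = (if u = v then 1 else 0)"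
    using pair.linear_independent_extend[of _ "\<lambda>u. if u = v then 1 else 0"] by blast
  have "\<phi> u = 0" if "u \<in> T" for u
    using \<phi>_T v T(1) that by auto
  then have "\<phi> w = 0" if "w \<in> W" for w
    using pair.linear_eq_0_on_span[OF \<phi>] T(3) that by blast
  with \<phi> \<phi>_T show thesis
    using that by simp
qed

lemma span_closed_linear_on:
  assumes span_B: "span H \<subseteq> B"
    and additive: "\<And>x y. x \<in> B \<Longrightarrow> y \<in> B \<Longrightarrow> \<phi> (x + y) = \<phi> x + \<phi> y"
    and homogeneous: "\<And>c x. x \<in> B \<Longrightarrow> \<phi> (c *s x) = c *s \<phi> x"
    and closed: "\<And>h. h \<in> H \<Longrightarrow> \<phi> h \<in> span H"
    and x: "x \<in> span H"
  shows "\<phi> x \<in> span H"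
proof -
  have "0 \<in> B"
    using span_B span_zero by blast
  then have "\<phi> 0 = 0"
    using homogeneous[of 0 0] by (simp only: scale_zero_left)
  then have "subspace {x. x \<in> span H \<and> \<phi> x \<in> span H}"
    using span_B
    by (intro subspaceI) (simp_all add: subset_eq additive homogeneous span_zero span_add span_scale)
  then have "x \<in> {x. x \<in> span H \<and> \<phi> x \<in> span H}"
    by (rule span_subspace_induct[OF x]) (simp add: closed span_base)
  then show ?thesis
    by simp
qed

lemma span_closed_bilinear:
  assumes B: "subspace B" "H \<subseteq> B"
    and add_left: "\<And>x y z. x \<in> B \<Longrightarrow> y \<in> B \<Longrightarrow> z \<in> B \<Longrightarrow> \<beta> (x + y) z = \<beta> x z + \<beta> y z"
    and add_right: "\<And>x y z. x \<in> B \<Longrightarrow> y \<in> B \<Longrightarrow> z \<in> B \<Longrightarrow> \<beta> z (x + y) = \<beta> z x + \<beta> z y"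
    and scale_left: "\<And>c x z. x \<in> B \<Longrightarrow> z \<in> B \<Longrightarrow> \<beta> (c *s x) z = c *s \<beta> x z"
    and scale_right: "\<And>c x z. x \<in> B \<Longrightarrow> z \<in> B \<Longrightarrow> \<beta> z (c *s x) = c *s \<beta> z x"
    and closed: "\<And>g h. g \<in> H \<Longrightarrow> h \<in> H \<Longrightarrow> \<beta> g h \<in> span H"
    and x: "x \<in> span H" and y: "y \<in> span H"
  shows "\<beta> x y \<in> span H"
proof -
  have span_B: "span H \<subseteq> B"
    by (rule span_minimal[OF B(2,1)])
  have left: "\<beta> x' h \<in> span H" if "x' \<in> span H" "h \<in> H" for x' h
  proof -
    have h: "h \<in> B"
      using that(2) B(2) by blast
    show ?thesis
      by (rule span_closed_linear_on[OF span_B _ _ _ that(1)])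
         (simp_all add: add_left scale_left closed that(2) h)
  qed
  have "x \<in> B"
    using x span_B by blast
  show ?thesis
    by (rule span_closed_linear_on[OF span_B _ _ _ y])
       (simp_all add: add_right scale_right left x \<open>x \<in> B\<close>)
qed

end

section \<open>Laurent series over a Lie algebra\<close>

(* laurent_br is bilinear only on such series: otherwise the sum defining a coefficient may
   have infinite support, and Sum_any then returns 0. *)
definition is_laurent_series :: "(int \<Rightarrow> 'a::zero) \<Rightarrow> bool" where
  "is_laurent_series f \<longleftrightarrow> (\<exists>N. \<forall>n<N. f n = 0)"

locale lie_alg =
  fixes scale :: "'k::field \<Rightarrow> 'g::ab_group_add \<Rightarrow> 'g"
    and br :: "'g \<Rightarrow> 'g \<Rightarrow> 'g"
  assumes lie_algebra: "lie_algebra scale br"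
begin

sublocale V: vector_space scale
  using lie_algebra by (simp add: lie_algebra_def)

sublocale F: vector_space "fun_scale scale"
  by (rule V.vector_space_fun_scale)

lemma laurent_span_eq_span: "laurent_span scale S = F.span S"
  unfolding laurent_span_def F.span_explicit
  by (auto simp: fun_eq_iff sum_fun_apply fun_scale_def)

lemma br_linear_left: "Vector_Spaces.linear scale scale (\<lambda>x. br x y)"
  and br_linear_right: "Vector_Spaces.linear scale scale (br x)"
  using lie_algebra by (simp_all add: lie_algebra_def)

lemma br_add_left: "br (x + y) z = br x z + br y z"
  and br_scale_left: "br (scale c x) z = scale c (br x z)"
  using br_linear_left[of z] by (simp_all add: Vector_Spaces.linear_iff)

lemma br_add_right: "br z (x + y) = br z x + br z y"
  and br_scale_right: "br z (scale c x) = scale c (br z x)"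
  using br_linear_right[of z] by (simp_all add: Vector_Spaces.linear_iff)

lemma br_zero_left [simp]: "br 0 z = 0"
  using br_scale_left[of 0 0 z] by simp

lemma br_zero_right [simp]: "br z 0 = 0"
  using br_scale_right[of z 0 0] by simp

lemma br_sum_left: "br (\<Sum>i\<in>A. f i) z = (\<Sum>i\<in>A. br (f i) z)"
  by (induction A rule: infinite_finite_induct) (simp_all add: br_add_left)

lemma br_sum_right: "br z (\<Sum>i\<in>A. f i) = (\<Sum>i\<in>A. br z (f i))"
  by (induction A rule: infinite_finite_induct) (simp_all add: br_add_right)

lemma br_self [simp]: "br x x = 0"
  using lie_algebra by (simp add: lie_algebra_def)

lemma br_anticommute: "br y x = - br x y"
proof -
  have "0 = br (x + y) (x + y)"
    by simp
  also have "\<dots> = br x y + br y x"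
    by (simp only: br_add_left br_add_right br_self[of x] br_self[of y] add_0_left add_0_right add.commute)
  finally show ?thesis
    by (metis add.commute eq_neg_iff_add_eq_0)
qed

lemma subspace_laurent_series: "F.subspace (Collect is_laurent_series)"
proof (rule F.subspaceI)
  fix f g :: "int \<Rightarrow> 'g"
  assume "f \<in> Collect is_laurent_series" "g \<in> Collect is_laurent_series"
  then obtain N M where "\<forall>n<N. f n = 0" "\<forall>n<M. g n = 0"
    by (auto simp: is_laurent_series_def)
  then show "f + g \<in> Collect is_laurent_series"
    by (auto simp: is_laurent_series_def intro!: exI[of _ "min N M"])
qed (auto simp: is_laurent_series_def fun_scale_def)

lemma finite_laurent_br_support:
  assumes "is_laurent_series f" "is_laurent_series h"
  shows "finite {m. br (f m) (h (n - m)) \<noteq> 0}"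
proof -
  obtain N M where "\<forall>m<N. f m = 0" "\<forall>m<M. h m = 0"
    using assms by (auto simp: is_laurent_series_def)
  then have "{m. br (f m) (h (n - m)) \<noteq> 0} \<subseteq> {N..n - M}"
    by (force simp: not_less[symmetric])
  then show ?thesis
    by (rule finite_subset) simp
qed

context
  fixes f g h :: "int \<Rightarrow> 'g"
  assumes f: "is_laurent_series f" and g: "is_laurent_series g" and h: "is_laurent_series h"
begin

lemma laurent_br_add_left: "laurent_br br (f + g) h = laurent_br br f h + laurent_br br g h"
  using finite_laurent_br_support[OF f h] finite_laurent_br_support[OF g h]
  by (simp add: fun_eq_iff laurent_br_def br_add_left Sum_any.distrib)

lemma laurent_br_add_right: "laurent_br br h (f + g) = laurent_br br h f + laurent_br br h g"
  using finite_laurent_br_support[OF h f] finite_laurent_br_support[OF h g]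
  by (simp add: fun_eq_iff laurent_br_def br_add_right Sum_any.distrib)

lemma laurent_br_scale_left:
  "laurent_br br (fun_scale scale c f) h = fun_scale scale c (laurent_br br f h)"
  using finite_laurent_br_support[OF f h]
  by (simp add: fun_eq_iff laurent_br_def fun_scale_def br_scale_left V.scale_Sum_any)

lemma laurent_br_scale_right:
  "laurent_br br h (fun_scale scale c f) = fun_scale scale c (laurent_br br h f)"
  using finite_laurent_br_support[OF h f]
  by (simp add: fun_eq_iff laurent_br_def fun_scale_def br_scale_right V.scale_Sum_any)

end

lemma laurent_br_span_closed:
  assumes "\<And>h. h \<in> H \<Longrightarrow> is_laurent_series h"
    and "\<And>g h. g \<in> H \<Longrightarrow> h \<in> H \<Longrightarrow> laurent_br br g h \<in> F.span H"
    and "f \<in> F.span H" "h \<in> F.span H"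
  shows "laurent_br br f h \<in> F.span H"
  by (rule F.span_closed_bilinear[OF subspace_laurent_series _ _ _ _ _ assms(2-4)])
     (use assms(1) in \<open>auto simp only: mem_Collect_eq laurent_br_add_left laurent_br_add_right
        laurent_br_scale_left laurent_br_scale_right\<close>)

lemma subspace_lie_gen: "F.subspace (lie_gen scale br S)"
  by (rule F.subspaceI)
     (simp_all add: zero_fun_def plus_fun_def fun_scale_def lie_gen.zero lie_gen.add lie_gen.smult)

lemma lie_gen_minimal:
  assumes "F.subspace A" "S \<subseteq> A" "\<And>f h. f \<in> A \<Longrightarrow> h \<in> A \<Longrightarrow> laurent_br br f h \<in> A"
  shows "lie_gen scale br S \<subseteq> A"
proof
  fix f
  assume "f \<in> lie_gen scale br S"
  then show "f \<in> A"
  proof induction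
    case zero
    show ?case
      using F.subspace_0[OF assms(1)] by (simp add: zero_fun_def)
  next
    case (add f h)
    then show ?case
      using F.subspace_add[OF assms(1)] by (simp add: plus_fun_def)
  next
    case (smult f c)
    then show ?case
      using F.subspace_scale[OF assms(1)] by (simp add: fun_scale_def)
  qed (use assms(2,3) in blast)+
qed

end

section \<open>Semisimple Lie algebras with a Killing-orthonormal basis\<close>

locale semisimple_orthonormal =
  fixes scale :: "'k::field \<Rightarrow> 'g::ab_group_add \<Rightarrow> 'g"
    and br :: "'g \<Rightarrow> 'g \<Rightarrow> 'g"
    and b :: "'i::finite \<Rightarrow> 'g"
  assumes semisimple: "semisimple scale br"
    and basis: "finite_dimensional_vector_space scale (range b)"
    and inj_basis: "inj b"
    and orthonormal: "\<And>i j. killing scale br (b i) (b j) = (if i = j then 1 else 0)"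
begin

sublocale lie_alg scale br
  using semisimple by unfold_locales (simp add: semisimple_def)

sublocale B: finite_dimensional_vector_space scale "range b"
  by (rule basis)

definition coord :: "'i \<Rightarrow> 'g \<Rightarrow> 'k" where
  "coord i y = V.representation (range b) y (b i)"

lemma basis_expansion: "(\<Sum>i\<in>UNIV. scale (coord i y) (b i)) = y"
proof -
  have "(\<Sum>i\<in>UNIV. scale (coord i y) (b i)) = (\<Sum>v\<in>range b. scale (V.representation (range b) y v) v)"
    by (simp add: sum.reindex inj_basis coord_def)
  also have "\<dots> = y"
    by (rule V.sum_representation_eq) (simp_all add: B.independent_Basis B.span_Basis)
  finally show ?thesis .
qed

lemma coord_basis: "coord i (b j) = (if i = j then 1 else 0)"
  using V.representation_basis[OF B.independent_Basis, of "b j"] inj_basis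
  by (simp add: coord_def inj_eq)

lemma coord_add: "coord i (x + y) = coord i x + coord i y"
  and coord_scale: "coord i (scale c x) = c * coord i x"
  unfolding coord_def
  by (simp_all add: V.representation_add V.representation_scale B.independent_Basis B.span_Basis)

lemma coord_zero [simp]: "coord i 0 = 0"
  by (simp add: coord_def V.representation_zero)

lemma coord_sum: "coord i (\<Sum>j\<in>A. f j) = (\<Sum>j\<in>A. coord i (f j))"
  by (induction A rule: infinite_finite_induct) (simp_all add: coord_add)

lemma coord_basis_sum: "coord i (\<Sum>j\<in>UNIV. scale (t j) (b j)) = t i"
  by (simp add: coord_sum coord_scale coord_basis if_distrib cong: if_cong)

lemma killing_add_left: "killing scale br (x + x') y = killing scale br x y + killing scale br x' y"
  and killing_scale_left: "killing scale br (scale c x) y = c * killing scale br x y"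
proof -
  define T where "T = (SOME T. finite T \<and> \<not> V.dependent T \<and> V.span T = UNIV)"
  have T: "V.independent T" "V.span T = UNIV"
    unfolding T_def by (rule someI2[of _ "range b"]; simp add: B.independent_Basis B.span_Basis)+
  have killing_T: "killing scale br x y = (\<Sum>v\<in>T. V.representation T (br x (br y v)) v)" for x y
    unfolding killing_def lin_trace_def T_def Let_def ..
  show "killing scale br (x + x') y = killing scale br x y + killing scale br x' y"
    unfolding killing_T br_add_left by (simp add: V.representation_add[OF T(1)] T(2) sum.distrib)
  show "killing scale br (scale c x) y = c * killing scale br x y"
    unfolding killing_T br_scale_left by (simp add: V.representation_scale[OF T(1)] T(2) sum_distrib_left)
qed

lemma killing_zero_left [simp]: "killing scale br 0 y = 0"
  using killing_scale_left[of 0 0 y] by (simp only: V.scale_zero_left mult_zero_left)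

lemma killing_basis_right: "killing scale br x (b l) = coord l x"
proof -
  have "killing scale br (\<Sum>i\<in>A. scale (coord i x) (b i)) (b l) =
        (\<Sum>i\<in>A. coord i x * killing scale br (b i) (b l))" for A
    by (induction A rule: infinite_finite_induct)
       (simp_all add: killing_add_left killing_scale_left)
  from this[of UNIV] show ?thesis
    by (simp add: basis_expansion orthonormal if_distrib cong: if_cong)
qed

lemma central_eq_zero:
  assumes central: "\<And>m. br x (b m) = 0"
  shows "x = 0"
proof -
  have "br x y = 0" for y
  proof -
    have "br x y = (\<Sum>i\<in>UNIV. scale (coord i y) (br x (b i)))"
      by (subst basis_expansion[of y, symmetric]) (simp only: br_sum_right br_scale_right)
    then show ?thesis
      by (simp add: central)
  qed
  then have br_x: "br y x = 0" for y
    by (simp add: br_anticommute[of y x])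
  define I where "I = V.span {x}"
  have I: "I = range (\<lambda>c. scale c x)"
    unfolding I_def by (rule V.span_singleton)
  have zero_I: "0 \<in> I"
    unfolding I_def by (rule V.span_zero)
  have br_I: "br u v = 0" if "v \<in> I" for u v
    using that by (auto simp: I br_scale_right br_x)
  have "lie_ideal scale br I"
    unfolding lie_ideal_def I_def
    using br_I zero_I by (simp add: I_def)
  moreover have "{br u v |u v. u \<in> I \<and> v \<in> I} = {0}"
  proof
    show "{br u v |u v. u \<in> I \<and> v \<in> I} \<subseteq> {0}"
      using br_I by auto
    have "br 0 0 \<in> {br u v |u v. u \<in> I \<and> v \<in> I}"
      using zero_I by blast
    then show "{0} \<subseteq> {br u v |u v. u \<in> I \<and> v \<in> I}"
      by simp
  qed
  then have "derived scale br (Suc 0) I = {0}"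
    by simp
  ultimately have "I = {0}"
    using semisimple unfolding semisimple_def solvable_ideal_def by blast
  then show "x = 0"
    unfolding I_def using V.span_base[of x "{x}"] by blast
qed

definition ad_dual :: "'i \<Rightarrow> 'i \<Rightarrow> 'g" where
  "ad_dual m l = (\<Sum>i\<in>UNIV. scale (coord l (br (b i) (b m))) (b i))"

lemma subspace_ad_dual_eq_UNIV:
  assumes W: "V.subspace W" and ad_dual_W: "\<And>l m. ad_dual m l \<in> W"
  shows "W = UNIV"
proof (rule ccontr)
  interpret pair: vector_space_pair scale "(*) :: 'k \<Rightarrow> 'k \<Rightarrow> 'k"
    by (intro vector_space_pair.intro V.vector_space_axioms vector_space_field)
  assume "W \<noteq> UNIV"
  then obtain i0 where i0: "b i0 \<notin> W"
    using V.span_minimal[of "range b" W] W B.span_Basis by blast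
  obtain \<phi> where \<phi>: "Vector_Spaces.linear scale (*) \<phi>"
    and \<phi>_W: "\<And>w. w \<in> W \<Longrightarrow> \<phi> w = 0" and \<phi>_i0: "\<phi> (b i0) = 1"
    using V.linear_functional_separating[OF W i0] by blast
  define x where "x = (\<Sum>i\<in>UNIV. scale (\<phi> (b i)) (b i))"
  have "br x (b m) = 0" for m
  proof -
    have "coord l (br x (b m)) = \<phi> (ad_dual m l)" for l
      unfolding x_def ad_dual_def
      by (simp add: br_sum_left br_scale_left coord_sum coord_scale pair.linear_sum[OF \<phi>]
          pair.linear_scale[OF \<phi>] mult.commute)
    then have "coord l (br x (b m)) = 0" for l
      using \<phi>_W ad_dual_W by simp
    then show ?thesis
      using basis_expansion[of "br x (b m)"] by simp
  qed
  then have "x = 0"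
    by (rule central_eq_zero)
  then have "\<phi> (b i0) = 0"
    using coord_basis_sum[of i0 "\<lambda>i. \<phi> (b i)"] unfolding x_def by simp
  then show False
    using \<phi>_i0 by simp
qed

end

section \<open>The Lie algebra g(r)\<close>

locale normalized_r_matrix = semisimple_orthonormal scale br b
  for scale :: "'k::field \<Rightarrow> 'g::ab_group_add \<Rightarrow> 'g" and br and b :: "'i::finite \<Rightarrow> 'g" +
  fixes r :: "int \<Rightarrow> nat \<Rightarrow> 'i \<Rightarrow> 'g"
  assumes r_matrix: "normalized_formal_gen_r_matrix scale br b r"
begin

sublocale VF: vector_space_pair scale "fun_scale scale" ..

definition coeff_series :: "nat \<Rightarrow> 'i \<Rightarrow> int \<Rightarrow> 'g" where
  "coeff_series k i = (\<lambda>n. r n k i)"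

lemma gr_eq_span: "gr scale r = F.span {coeff_series k i |k i. True}"
  unfolding gr_def laurent_span_eq_span coeff_series_def ..

lemma r_negative:
  assumes "n < 0"
  shows "r n k i = (if n = - int k - 1 then b i else 0)"
proof -
  have "rzero b r n k i = 0"
    using r_matrix assms
    unfolding normalized_formal_gen_r_matrix_def normalized_standard_form_def by blast
  then show ?thesis
    by (simp add: rzero_def gam_def)
qed

lemma is_laurent_series_coeff_series: "is_laurent_series (coeff_series k i)"
  unfolding is_laurent_series_def coeff_series_def
  by (rule exI[of _ "- int k - 1"]) (simp add: r_negative)

(* (1 \<otimes> \<alpha>) applied to the y^k-coefficient of r, for the functional \<alpha> with \<alpha> b_i = coord i y. *)
definition contract :: "nat \<Rightarrow> 'g \<Rightarrow> int \<Rightarrow> 'g" where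
  "contract k y = (\<Sum>i\<in>UNIV. fun_scale scale (coord i y) (coeff_series k i))"

lemma linear_contract: "Vector_Spaces.linear scale (fun_scale scale) (contract k)"
  unfolding Vector_Spaces.linear_iff contract_def
  by (simp add: V.vector_space_axioms F.vector_space_axioms coord_add coord_scale
      F.scale_left_distrib sum.distrib F.scale_sum_right)

lemma contract_basis_sum:
  "contract k (\<Sum>i\<in>UNIV. scale (t i) (b i)) = (\<Sum>i\<in>UNIV. fun_scale scale (t i) (coeff_series k i))"
  by (simp add: contract_def coord_basis_sum)

lemma contract_basis: "contract k (b j) = coeff_series k j"
proof -
  have "fun_scale scale (coord i (b j)) (coeff_series k i) = (if i = j then coeff_series k i else 0)" for i
    by (simp add: coord_basis)
  then show ?thesis
    by (simp add: contract_def)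
qed

lemma contract_zero [simp]: "contract k 0 = 0"
  by (rule VF.linear_0[OF linear_contract])

lemma range_contract_eq_span: "range (contract k) = F.span (range (coeff_series k))"
  using VF.linear_span_image[OF linear_contract, of k "range b"]
  by (simp add: B.span_Basis image_image contract_basis)

lemma subspace_range_contract: "F.subspace (range (contract k))"
  by (simp add: range_contract_eq_span)

lemma functional_images_eq_range_contract:
  "{(\<lambda>n. \<Sum>i\<in>UNIV. scale (\<alpha> (b i)) (r n 0 i)) |\<alpha>. Vector_Spaces.linear scale (*) \<alpha>} =
   range (contract 0)"
proof -
  have expansion: "(\<lambda>n. \<Sum>i\<in>UNIV. scale (t i) (r n 0 i)) = contract 0 (\<Sum>i\<in>UNIV. scale (t i) (b i))" for t
    by (simp add: contract_basis_sum fun_eq_iff sum_fun_apply fun_scale_def coeff_series_def)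
  have functional: "\<exists>\<alpha>. Vector_Spaces.linear scale (*) \<alpha> \<and> (\<forall>i. \<alpha> (b i) = coord i y)" for y
  proof (intro exI conjI allI)
    show "Vector_Spaces.linear scale (*) (\<lambda>x. \<Sum>j\<in>UNIV. coord j x * coord j y)"
      unfolding Vector_Spaces.linear_iff
      by (simp add: V.vector_space_axioms vector_space_field coord_add coord_scale
          distrib_right sum.distrib sum_distrib_left mult.assoc)
    show "(\<Sum>j\<in>UNIV. coord j (b i) * coord j y) = coord i y" for i
      by (simp add: coord_basis if_distrib[of "\<lambda>c. c * _"] cong: if_cong)
  qed
  show ?thesis
    unfolding expansion
  proof (intro equalityI subsetI)
    fix f
    assume "f \<in> range (contract 0)"
    then obtain y where y: "f = contract 0 y"
      by blast
    obtain \<alpha> where \<alpha>: "Vector_Spaces.linear scale (*) \<alpha>" "\<forall>i. \<alpha> (b i) = coord i y"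
      using functional by blast
    then have "f = contract 0 (\<Sum>i\<in>UNIV. scale (\<alpha> (b i)) (b i))"
      using y basis_expansion[of y] by simp
    with \<alpha>(1) show "f \<in> {contract 0 (\<Sum>i\<in>UNIV. scale (\<alpha> (b i)) (b i)) |\<alpha>. Vector_Spaces.linear scale (*) \<alpha>}"
      by blast
  qed blast
qed

(* The combination of the r_{k,i}, 1 \<le> k \<le> K, having the same coefficients as f at
   z^(-2), ..., z^(-K-1). *)
definition principal_lift :: "nat \<Rightarrow> (int \<Rightarrow> 'g) \<Rightarrow> int \<Rightarrow> 'g" where
  "principal_lift K f = (\<Sum>k\<in>{1..K}. contract k (f (- int k - 1)))"

lemma principal_lift_add: "principal_lift K (f + g) = principal_lift K f + principal_lift K g"
  by (simp add: principal_lift_def VF.linear_add[OF linear_contract] sum.distrib)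

lemma principal_lift_scale:
  "principal_lift K (fun_scale scale c f) = fun_scale scale c (principal_lift K f)"
  by (simp add: principal_lift_def fun_scale_def[of scale c f] VF.linear_scale[OF linear_contract]
      F.scale_sum_right)

lemma principal_lift_coeff_series:
  assumes "k \<le> K"
  shows "principal_lift K (coeff_series k i) = (if k = 0 then 0 else coeff_series k i)"
proof -
  have "contract k' (coeff_series k i (- int k' - 1)) = (if k' = k then coeff_series k i else 0)" for k'
    by (simp add: coeff_series_def r_negative contract_basis)
  then show ?thesis
    using assms by (simp add: principal_lift_def)
qed

lemma principal_lift_zinv: "f \<in> zinv_power_series \<Longrightarrow> principal_lift K f = 0"
  by (simp add: principal_lift_def zinv_power_series_def)

lemma eventually_sub_principal_lift:
  assumes "f \<in> gr scale r"
  shows "eventually (\<lambda>K. f - principal_lift K f \<in> range (contract 0)) sequentially"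
proof (rule F.span_induct[OF assms[unfolded gr_eq_span]])
  show "F.subspace {f. \<forall>\<^sub>F K in sequentially. f - principal_lift K f \<in> range (contract 0)}"
  proof (intro F.subspaceI; simp only: mem_Collect_eq)
    fix f g c
    assume f: "\<forall>\<^sub>F K in sequentially. f - principal_lift K f \<in> range (contract 0)"
      and g: "\<forall>\<^sub>F K in sequentially. g - principal_lift K g \<in> range (contract 0)"
    have split: "f + g - principal_lift K (f + g) = (f - principal_lift K f) + (g - principal_lift K g)" for K
      by (simp add: principal_lift_add algebra_simps)
    show "\<forall>\<^sub>F K in sequentially. f + g - principal_lift K (f + g) \<in> range (contract 0)"
      using eventually_conj[OF f g]
      by eventually_elim (simp only: split F.subspace_add[OF subspace_range_contract])
    show "\<forall>\<^sub>F K in sequentially.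
        fun_scale scale c f - principal_lift K (fun_scale scale c f) \<in> range (contract 0)"
      using f by eventually_elim
        (simp add: principal_lift_scale F.scale_right_diff_distrib[symmetric]
          F.subspace_scale[OF subspace_range_contract])
  qed (simp add: principal_lift_def F.subspace_0[OF subspace_range_contract])
next
  fix f
  assume "f \<in> {coeff_series k i |k i. True}"
  then obtain k i where f: "f = coeff_series k i"
    by blast
  have "f - principal_lift K f \<in> range (contract 0)" if "k \<le> K" for K
    using that contract_basis[of 0 i, symmetric] F.subspace_0[OF subspace_range_contract]
    by (auto simp: f principal_lift_coeff_series)
  then show "\<forall>\<^sub>F K in sequentially. f - principal_lift K f \<in> range (contract 0)"
    unfolding eventually_sequentially by blast
qed

lemma gr_inter_zinv_eq_range_contract: "gr scale r \<inter> zinv_power_series = range (contract 0)"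
proof (intro equalityI subsetI)
  fix f
  assume "f \<in> gr scale r \<inter> zinv_power_series"
  then show "f \<in> range (contract 0)"
    using eventually_sub_principal_lift[of f]
    by (auto simp: principal_lift_zinv eventually_sequentially)
next
  fix f
  assume "f \<in> range (contract 0)"
  moreover have "range (contract 0) \<subseteq> gr scale r"
    unfolding range_contract_eq_span gr_eq_span by (rule F.span_mono) blast
  moreover have "contract 0 y n = 0" if "n < -1" for y n
    using that by (simp add: contract_def fun_scale_def sum_fun_apply coeff_series_def r_negative)
  ultimately show "f \<in> gr scale r \<inter> zinv_power_series"
    by (auto simp: zinv_power_series_def)
qed

lemma cybe_series_sum_eq_zero:
  "(\<lambda>a. cybe1 scale br b r a e c l m) + (\<lambda>a. cybe2 scale br b r a e c l m) +
   (\<lambda>a. cybe3 scale br b r a e c l m) = 0"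
  using r_matrix by (simp add: fun_eq_iff normalized_formal_gen_r_matrix_def)

lemma cybe1_series:
  "(\<lambda>a. cybe1 scale br b r a (int e) c l m) = laurent_br br (coeff_series e l) (coeff_series c m)"
  by (simp add: fun_eq_iff cybe1_def laurent_br_def rI_def coeff_series_def)

lemma cybe2_eq_sum:
  "cybe2 scale br b r a e c l m =
     (\<Sum>q\<in>{0..e + int c + 1}. \<Sum>i\<in>UNIV.
        scale (killing scale br (br (b i) (r (e - q) c m)) (b l)) (r a (nat q) i))"
proof -
  define t where "t q = (\<Sum>i\<in>UNIV. scale (killing scale br (br (b i) (r (e - q) c m)) (b l)) (rI r a q i))"
    for q
  have "t q = 0" if "q < 0 \<or> e + int c + 1 < q" for q
    using that by (auto simp: t_def rI_def r_negative)
  then have "{q. t q \<noteq> 0} \<subseteq> {0..e + int c + 1}"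
    by force
  then have "cybe2 scale br b r a e c l m = (\<Sum>q\<in>{0..e + int c + 1}. t q)"
    unfolding cybe2_def t_def[symmetric] by (simp add: Sum_any.expand_superset)
  then show ?thesis
    by (simp add: t_def rI_def)
qed

lemma cybe2_series_in_gr: "(\<lambda>a. cybe2 scale br b r a e c l m) \<in> gr scale r"
proof -
  have "(\<lambda>a. cybe2 scale br b r a e c l m) =
      (\<Sum>q\<in>{0..e + int c + 1}. \<Sum>i\<in>UNIV.
         fun_scale scale (killing scale br (br (b i) (r (e - q) c m)) (b l)) (coeff_series (nat q) i))"
    by (simp add: fun_eq_iff cybe2_eq_sum sum_fun_apply fun_scale_def coeff_series_def)
  also have "\<dots> \<in> gr scale r"
    unfolding gr_eq_span by (intro F.span_sum F.span_scale F.span_base) blast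
  finally show ?thesis .
qed

lemma cybe3_series_in_span:
  "(\<lambda>a. cybe3 scale br b r a e c l m) \<in> F.span {coeff_series c' i |c' i. c' \<le> c}"
proof -
  have "(\<lambda>a. cybe3 scale br b r a e c l m) =
      (\<Sum>c'\<in>{..c}. \<Sum>i\<in>UNIV. \<Sum>j\<in>UNIV. fun_scale scale
         (killing scale br (rbar scale br b r e (c - c') j) (b l) * killing scale br (br (b i) (b j)) (b m))
         (coeff_series c' i))"
    by (simp add: fun_eq_iff cybe3_def sum_fun_apply fun_scale_def coeff_series_def)
  also have "\<dots> \<in> F.span {coeff_series c' i |c' i. c' \<le> c}"
    by (intro F.span_sum F.span_scale F.span_base) auto
  finally show ?thesis .
qed

lemma laurent_br_coeff_series_in_gr:
  "laurent_br br (coeff_series e l) (coeff_series c m) \<in> gr scale r"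
proof -
  have "laurent_br br (coeff_series e l) (coeff_series c m) +
      ((\<lambda>a. cybe2 scale br b r a (int e) c l m) + (\<lambda>a. cybe3 scale br b r a (int e) c l m)) = 0"
    using cybe_series_sum_eq_zero[of "int e" c l m] unfolding cybe1_series by (simp only: add.assoc)
  then have "laurent_br br (coeff_series e l) (coeff_series c m) =
      - ((\<lambda>a. cybe2 scale br b r a (int e) c l m) + (\<lambda>a. cybe3 scale br b r a (int e) c l m))"
    by (simp only: eq_neg_iff_add_eq_0)
  moreover have "{coeff_series c' i |c' i. c' \<le> c} \<subseteq> {coeff_series k i |k i. True}"
    by blast
  then have "(\<lambda>a. cybe3 scale br b r a (int e) c l m) \<in> gr scale r"
    unfolding gr_eq_span using cybe3_series_in_span F.span_mono by blast
  then have "- ((\<lambda>a. cybe2 scale br b r a (int e) c l m) + (\<lambda>a. cybe3 scale br b r a (int e) c l m))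
      \<in> gr scale r"
    using cybe2_series_in_gr unfolding gr_eq_span by (intro F.span_neg F.span_add)
  ultimately show ?thesis
    by (simp only:)
qed

lemma lie_gen_subset_gr: "lie_gen scale br (range (contract 0)) \<subseteq> gr scale r"
proof (rule lie_gen_minimal)
  show "F.subspace (gr scale r)"
    unfolding gr_eq_span by (rule F.subspace_span)
  show "range (contract 0) \<subseteq> gr scale r"
    using gr_inter_zinv_eq_range_contract by blast
  have "is_laurent_series g" if "g \<in> {coeff_series k i |k i. True}" for g
    using that is_laurent_series_coeff_series by blast
  moreover have "laurent_br br g h \<in> F.span {coeff_series k i |k i. True}"
    if "g \<in> {coeff_series k i |k i. True}" "h \<in> {coeff_series k i |k i. True}" for g h
    using that laurent_br_coeff_series_in_gr unfolding gr_eq_span by blast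
  ultimately show "laurent_br br f h \<in> gr scale r" if "f \<in> gr scale r" "h \<in> gr scale r" for f h
    using that unfolding gr_eq_span by (rule laurent_br_span_closed)
qed

lemma cybe2_at_zero:
  "cybe2 scale br b r a 0 c l m =
     (\<Sum>i\<in>UNIV. scale (coord l (br (b i) (r 0 c m))) (r a 0 i)) +
     (\<Sum>i\<in>UNIV. scale (coord l (br (b i) (b m))) (r a (Suc c) i))"
proof -
  define t where "t q = (\<Sum>i\<in>UNIV. scale (killing scale br (br (b i) (r (0 - q) c m)) (b l)) (r a (nat q) i))"
    for q
  (* r (- q) c m vanishes for 0 < q < c + 1; at q = c + 1 it is the pole coefficient b m *)
  have "t q = 0" if "q \<in> {0..0 + int c + 1} - {0, int c + 1}" for q
    using that by (simp add: t_def r_negative)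
  then have "cybe2 scale br b r a 0 c l m = (\<Sum>q\<in>{0, int c + 1}. t q)"
    unfolding cybe2_eq_sum t_def[symmetric] by (intro sum.mono_neutral_right) auto
  also have "\<dots> = t 0 + t (int c + 1)"
    by simp
  finally show ?thesis
    by (simp add: t_def r_negative killing_basis_right nat_add_distrib)
qed

abbreviation lie_gen_r0 :: "(int \<Rightarrow> 'g) set" where
  "lie_gen_r0 \<equiv> lie_gen scale br (range (contract 0))"

lemma contract_ad_dual_in_lie_gen:
  assumes lower: "\<And>c' i. c' \<le> c \<Longrightarrow> coeff_series c' i \<in> lie_gen_r0"
  shows "contract (Suc c) (ad_dual m l) \<in> lie_gen_r0"
proof -
  define y where "y = (\<Sum>i\<in>UNIV. scale (coord l (br (b i) (r 0 c m))) (b i))"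
  define X where "X = laurent_br br (coeff_series 0 l) (coeff_series c m)"
  define Z where "Z = (\<lambda>a. cybe3 scale br b r a 0 c l m)"
  have "(\<lambda>a. cybe2 scale br b r a 0 c l m) = contract 0 y + contract (Suc c) (ad_dual m l)"
    by (simp add: fun_eq_iff cybe2_at_zero y_def ad_dual_def contract_basis_sum sum_fun_apply
        fun_scale_def coeff_series_def)
  then have "X + (contract 0 y + contract (Suc c) (ad_dual m l)) + Z = 0"
    using cybe_series_sum_eq_zero[of 0 c l m] cybe1_series[of 0 c l m] by (simp add: X_def Z_def)
  then have eq: "contract (Suc c) (ad_dual m l) = - (X + contract 0 y + Z)"
    by (simp only: eq_neg_iff_add_eq_0 ac_simps)
  have "X \<in> lie_gen_r0"
    unfolding X_def by (intro lie_gen.bracket lower) simp_all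
  moreover have "contract 0 y \<in> lie_gen_r0"
    by (rule lie_gen.base) simp
  moreover have "{coeff_series c' i |c' i. c' \<le> c} \<subseteq> lie_gen_r0"
    using lower by blast
  then have "Z \<in> lie_gen_r0"
    unfolding Z_def by (rule subsetD[OF F.span_minimal[OF _ subspace_lie_gen] cybe3_series_in_span])
  ultimately have "- (X + contract 0 y + Z) \<in> lie_gen_r0"
    by (intro F.subspace_neg[OF subspace_lie_gen] F.subspace_add[OF subspace_lie_gen])
  then show ?thesis
    by (simp only: eq)
qed

lemma coeff_series_in_lie_gen: "coeff_series k i \<in> lie_gen_r0"
proof (induction k arbitrary: i rule: less_induct)
  case (less k)
  show ?case
  proof (cases k)
    case 0
    have "coeff_series 0 i \<in> range (contract 0)"
      using contract_basis[of 0 i] by (metis rangeI)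
    then show ?thesis
      by (simp add: 0 lie_gen.base)
  next
    case (Suc c)
    have "V.subspace (contract k -` lie_gen_r0)"
      by (rule VF.linear_subspace_vimage[OF linear_contract subspace_lie_gen])
    moreover have "ad_dual m l \<in> contract k -` lie_gen_r0" for l m
      using contract_ad_dual_in_lie_gen less Suc by simp
    ultimately have "contract k -` lie_gen_r0 = UNIV"
      by (rule subspace_ad_dual_eq_UNIV)
    then show ?thesis
      by (metis UNIV_I contract_basis vimageE)
  qed
qed

lemma gr_subset_lie_gen: "gr scale r \<subseteq> lie_gen_r0"
  unfolding gr_eq_span
  by (rule F.span_minimal[OF _ subspace_lie_gen]) (auto intro: coeff_series_in_lie_gen)

end

theorem lemma1p11:
  fixes scale :: "'k::field_char_0 \<Rightarrow> 'g::ab_group_add \<Rightarrow> 'g"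
    and br :: "'g \<Rightarrow> 'g \<Rightarrow> 'g"
    and b :: "'i::finite \<Rightarrow> 'g"
    and r :: "int \<Rightarrow> nat \<Rightarrow> 'i \<Rightarrow> 'g"
  assumes ss: "semisimple scale br"
    and basis: "finite_dimensional_vector_space scale (range b)"
    and inj: "inj b"
    and orthonormal: "\<And>i j. killing scale br (b i) (b j) = (if i = j then 1 else 0)"
    and rmat: "normalized_formal_gen_r_matrix scale br b r"
  shows "gr scale r \<inter> zinv_power_series =
           {(\<lambda>n. \<Sum>i\<in>UNIV. scale (\<alpha> (b i)) (r n 0 i)) | \<alpha>. Vector_Spaces.linear scale (*) \<alpha>}
     \<and> lie_gen scale br {(\<lambda>n. \<Sum>i\<in>UNIV. scale (\<alpha> (b i)) (r n 0 i)) | \<alpha>. Vector_Spaces.linear scale (*) \<alpha>}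
         = gr scale r"
proof -
  interpret normalized_r_matrix scale br b r
    by (intro normalized_r_matrix.intro semisimple_orthonormal.intro normalized_r_matrix_axioms.intro assms)
  show ?thesis
    unfolding functional_images_eq_range_contract
    using gr_inter_zinv_eq_range_contract lie_gen_subset_gr gr_subset_lie_gen by blast
qed

end
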